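(* Let $\lambda\neq 0$ and let the numbers $a_i(N;\lambda)$ ($N\ge 0$, $0\le i\le N$) be defined as in the context. Then: (i) $a_0(0;\lambda)=\frac{1}{\lambda}$, $a_0(1;\lambda)=1$, $a_1(1;\lambda)=-1$; (ii) for all $N\ge 0$, $a_0(N+1;\lambda)=(N+\lambda)_N$ and $a_{N+1}(N+1;\lambda)=(-1)^{N+1}\lambda^N (N+1)!$; (iii) for all $N\ge 1$ and $1\le k\le N$, $$a_k(N+1;\lambda)=-k\lambda\sum_{i_1=0}^{N-k+1}\bigl(N+(k+1)\lambda\bigr)_{i_1}\,a_{k-1}(N-i_1;\lambda).$$
   Context: Here $(x)_n=x(x-1)\cdots(x-n+1)$ for $n\ge 1$ and $(x)_0=1$ (falling factorial). Let $F(t)=F(t;\lambda)=\frac{1}{(1+t)^{\lambda}+1}$. The numbers $a_i(N;\lambda)$ are the coefficients for which, for every $N\ge 0$, $$\left(\frac{d}{dt}\right)^N F(t)=\frac{(-1)^N\lambda}{(1+t)^N}\sum_{i=1}^{N+1}a_{i-1}(N;\lambda)F(t)^i;$$ concretely, they are defined recursively by $a_0(0;\lambda)=1/\lambda$ and, for $N\ge 0$: $a_0(N+1;\lambda)=(N+\lambda)a_0(N;\lambda)$, $a_{N+1}(N+1;\lambda)=-(N+1)\lambda\,a_N(N;\lambda)$, and $a_{k}(N+1;\lambda)=-k\lambda\,a_{k-1}(N;\lambda)+(N+(k+1)\lambda)a_{k}(N;\lambda)$ for $1\le k\le N$. (Equivalently, $P_N(x)=\lambda\sum_{i=1}^{N+1}a_{i-1}(N;\lambda)x^i$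 satisfies $P_0(x)=x$ and $P_{N+1}(x)=NP_N(x)+\lambda(x-x^2)P_N'(x)$.) *)

theory Defs
  imports Complex_Main
begin

definition falling_fact :: "real \<Rightarrow> nat \<Rightarrow> real" where
  "falling_fact x n = (\<Prod>i<n. (x - of_nat i))"

text \<open>The coefficients a_k(N;lambda), written acoef lam N k.  They are given by the
recursion of the paper; for k > N the value is 0 (never used in the statement,
it only makes the recursion uniform: a_{N+1}(N+1) = -(N+1) lam a_N(N)).\<close>
fun acoef :: "real \<Rightarrow> nat \<Rightarrow> nat \<Rightarrow> real" where
  "acoef lam 0 k = (if k = 0 then 1 / lam else 0)"
| "acoef lam (Suc N) k =
     (if k = 0 then (real N + lam) * acoef lam N 0
      else - (real k * lam) * acoef lam N (k - 1) + (real N + real (k + 1) * lam) * acoef lam N k)"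

end

theory Submission
  imports Defs
begin

text \<open>Parts (i) and (ii) follow by induction on \<open>N\<close> from the two boundary
recursions, using \<open>\<lambda> a\<^sub>0(0;\<lambda>) = 1\<close>.  For (iii), the interior
recursion is unrolled along its second term: after \<open>m + 1\<close> steps one has
\<open>a\<^sub>k(N+1) = -k\<lambda> \<Sum>\<^sub>i\<^sub>\<le>\<^sub>m (x)\<^sub>i a\<^sub>k\<^sub>-\<^sub>1(N-i) + (x)\<^sub>m\<^sub>+\<^sub>1 a\<^sub>k(N-m)\<close> with
\<open>x = N + (k+1)\<lambda>\<close>, since the coefficient \<open>N - i + (k+1)\<lambda>\<close> met at level
\<open>N - i\<close> is exactly the next factor \<open>x - i\<close> of the falling factorial.  Taking
\<open>m = N - k + 1\<close> the remainder is \<open>a\<^sub>k(k-1) = 0\<close>.\<close>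

lemma acoef_eq_0_if_gt: "N < k \<Longrightarrow> acoef lam N k = 0"
  by (induction N arbitrary: k) auto

lemma falling_fact_Suc: "falling_fact x (Suc n) = falling_fact x n * (x - of_nat n)"
  unfolding falling_fact_def by simp

lemma falling_fact_Suc_shift: "falling_fact (x + 1) (Suc n) = (x + 1) * falling_fact x n"
  unfolding falling_fact_def by (subst prod.lessThan_Suc_shift) (simp add: algebra_simps)

lemma acoef_Suc_0: "acoef lam (N + 1) 0 = falling_fact (real N + lam) N * (lam * acoef lam 0 0)"
proof (induction N)
  case 0
  then show ?case by (simp add: falling_fact_def)
next
  case (Suc N)
  then show ?case
    using falling_fact_Suc_shift[of "real N + lam" N] by (simp add: algebra_simps)
qed

lemma acoef_Suc_diag:
  "acoef lam (N + 1) (N + 1) = (-1) ^ (N + 1) * lam ^ N * fact (N + 1) * (lam * acoef lam 0 0)"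
proof (induction N)
  case 0
  then show ?case by simp
next
  case (Suc N)
  have "acoef lam (Suc N + 1) (Suc N + 1) = - (real (N + 2) * lam) * acoef lam (N + 1) (N + 1)"
    using acoef_eq_0_if_gt[of "N + 1" "N + 2" lam] by simp
  also have "\<dots> = (-1) ^ (Suc N + 1) * lam ^ Suc N * fact (Suc N + 1) * (lam * acoef lam 0 0)"
    unfolding Suc by (simp add: algebra_simps fact_Suc)
  finally show ?case .
qed

lemma acoef_Suc_unfold:
  fixes lam :: real and k m N :: nat
  assumes "1 \<le> k" "m \<le> N"
  defines "x \<equiv> real N + real (k + 1) * lam"
  shows "acoef lam (N + 1) k =
     - (real k * lam) * (\<Sum>i = 0..m. falling_fact x i * acoef lam (N - i) (k - 1))
     + falling_fact x (m + 1) * acoef lam (N - m) k"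
  using assms(2)
proof (induction m)
  case 0
  then show ?case using assms(1) by (simp add: x_def falling_fact_def)
next
  case (Suc m)
  have level: "N - m = Suc (N - Suc m)" using Suc.prems by simp
  have step: "acoef lam (N - m) k = - (real k * lam) * acoef lam (N - Suc m) (k - 1)
        + (real (N - Suc m) + real (k + 1) * lam) * acoef lam (N - Suc m) k"
    unfolding level using assms(1) by simp
  have factor: "falling_fact x (Suc m + 1)
      = falling_fact x (m + 1) * (real (N - Suc m) + real (k + 1) * lam)"
    using falling_fact_Suc[of x "m + 1"] Suc.prems by (simp add: x_def of_nat_diff)
  have "falling_fact x (m + 1) * acoef lam (N - m) k =
      - (real k * lam) * (falling_fact x (Suc m) * acoef lam (N - Suc m) (k - 1))
      + falling_fact x (Suc m + 1) * acoef lam (N - Suc m) k"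
    unfolding step factor by (simp add: algebra_simps)
  with Suc show ?case
    by (simp only: sum.atLeast0_atMost_Suc) (simp add: algebra_simps)
qed

theorem theorem1:
  fixes lam :: real
  assumes "lam \<noteq> 0"
  shows "(acoef lam 0 0 = 1 / lam \<and> acoef lam 1 0 = 1 \<and> acoef lam 1 1 = -1)
    \<and> (\<forall>N. acoef lam (N + 1) 0 = falling_fact (real N + lam) N
            \<and> acoef lam (N + 1) (N + 1) = (-1) ^ (N + 1) * lam ^ N * fact (N + 1))
    \<and> (\<forall>N k. 1 \<le> N \<longrightarrow> 1 \<le> k \<longrightarrow> k \<le> N \<longrightarrow>
            acoef lam (N + 1) k =
              - (real k * lam) * (\<Sum>i1 = 0..N - k + 1.
                   falling_fact (real N + real (k + 1) * lam) i1 * acoef lam (N - i1) (k - 1)))"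
proof -
  have normalized: "lam * acoef lam 0 0 = 1" using assms by simp
  have interior: "acoef lam (N + 1) k =
              - (real k * lam) * (\<Sum>i1 = 0..N - k + 1.
                   falling_fact (real N + real (k + 1) * lam) i1 * acoef lam (N - i1) (k - 1))"
    if "1 \<le> k" "k \<le> N" for N k
  proof -
    have "acoef lam (N - (N - k + 1)) k = 0"
      using that by (intro acoef_eq_0_if_gt) simp
    then show ?thesis using acoef_Suc_unfold[of k "N - k + 1" N lam] that by simp
  qed
  show ?thesis
    using acoef_Suc_0[of lam] acoef_Suc_diag[of lam] normalized interior assms by simp
qed

end
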